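(* Let $u_0\in(0,1)$. Assume $\eta(X)$ has an atomless distribution and consider only scoring functions $s$ for which $s(X)$ has an atomless distribution. Then: (1) for every such $s$ and every such $s^*\in\mathcal S^*$, $W(s,u_0)\le W(s^*,u_0)$; (2) for every such $s$, \[ W(s,u_0)=\frac p2\,\beta(s,u_0)\big(2-\beta(s,u_0)\big)+(1-p)\,\mathrm{LocAUC}(s,u_0). \]
   Context: $(X,Y)$ random pair in $\mathcal X\times\{-1,+1\}$, $(X',Y')$ an independent copy, $\eta(x)=\mathbb P\{Y=1\mid X=x\}$, $p=\mathbb P\{Y=1\}\in(0,1)$. For a scoring function $s$, $F_s$ is the cdf of $s(X)$, $Q(s,v)=\inf\{t:F_s(t)\ge v\}$, $C_{s,u}=\{x:s(x)\ge Q(s,1-u)\}$, $C^*_u=C_{\eta,u}$, $\beta(s,u)=\mathbb P\{s(X)\ge Q(s,1-u)\mid Y=1\}$, and $\mathrm{LocAUC}(s,u)=\mathbb P\{s(X)>s(X'),\ s(X)\ge Q(s,1-u)\mid Y=1,Y'=-1\}$. With $\Phi_{u_0}(v)=v\,\mathbb I\{v>1-u_0\}$, the $W$-criterion at rate $u_0$ is $W(s,u_0)=\mathbb E\big(\Phi_{u_0}(F_s(s(X)))\mid Y=1\big)$. $\mathcal S^*$ is the set of scoring functions $s^*$ with $s^*(x)=\eta(x)$ for $x\in C^*_{u_0}$ and $s^*(x)<\inf_{C^*_{u_0}}\eta$ for $x\notin C^*_{u_0}$. *)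

theory Defs
  imports "HOL-Probability.Probability"
begin

definition condP :: "'w measure \<Rightarrow> 'w set \<Rightarrow> 'w set \<Rightarrow> real" where
  "condP M A B = measure M (A \<inter> B) / measure M B"

definition cdfS :: "'w measure \<Rightarrow> ('w \<Rightarrow> 'a) \<Rightarrow> ('a \<Rightarrow> real) \<Rightarrow> real \<Rightarrow> real" where
  "cdfS M X s t = measure M {\<omega> \<in> space M. s (X \<omega>) \<le> t}"

definition Qf :: "'w measure \<Rightarrow> ('w \<Rightarrow> 'a) \<Rightarrow> ('a \<Rightarrow> real) \<Rightarrow> real \<Rightarrow> real" where
  "Qf M X s v = Inf {t. cdfS M X s t \<ge> v}"

definition Cset :: "'w measure \<Rightarrow> ('w \<Rightarrow> 'a) \<Rightarrow> 'a measure \<Rightarrow> ('a \<Rightarrow> real) \<Rightarrow> real \<Rightarrow> 'a set" where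
  "Cset M X N s u = {x \<in> space N. s x \<ge> Qf M X s (1 - u)}"

definition betaS :: "'w measure \<Rightarrow> ('w \<Rightarrow> 'a) \<Rightarrow> ('w \<Rightarrow> real) \<Rightarrow> ('a \<Rightarrow> real) \<Rightarrow> real \<Rightarrow> real" where
  "betaS M X Y s u = condP M {\<omega> \<in> space M. s (X \<omega>) \<ge> Qf M X s (1 - u)} {\<omega> \<in> space M. Y \<omega> = 1}"

definition LocAUC :: "'w measure \<Rightarrow> ('w \<Rightarrow> 'a) \<Rightarrow> ('w \<Rightarrow> real) \<Rightarrow> ('w \<Rightarrow> 'a) \<Rightarrow> ('w \<Rightarrow> real)
    \<Rightarrow> ('a \<Rightarrow> real) \<Rightarrow> real \<Rightarrow> real" where
  "LocAUC M X Y X' Y' s u = condP M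
     {\<omega> \<in> space M. s (X \<omega>) > s (X' \<omega>) \<and> s (X \<omega>) \<ge> Qf M X s (1 - u)}
     {\<omega> \<in> space M. Y \<omega> = 1 \<and> Y' \<omega> = -1}"

definition PhiW :: "real \<Rightarrow> real \<Rightarrow> real" where
  "PhiW u0 v = v * (if v > 1 - u0 then 1 else 0)"

definition Wcrit :: "'w measure \<Rightarrow> ('w \<Rightarrow> 'a) \<Rightarrow> ('w \<Rightarrow> real) \<Rightarrow> ('a \<Rightarrow> real) \<Rightarrow> real \<Rightarrow> real" where
  "Wcrit M X Y s u0 =
     (\<integral>\<omega>. PhiW u0 (cdfS M X s (s (X \<omega>))) * indicator {\<omega> \<in> space M. Y \<omega> = 1} \<omega> \<partial>M)
       / measure M {\<omega> \<in> space M. Y \<omega> = 1}"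

definition atomless_rv :: "'w measure \<Rightarrow> ('w \<Rightarrow> real) \<Rightarrow> bool" where
  "atomless_rv M f \<longleftrightarrow> (\<forall>t. measure M {\<omega> \<in> space M. f \<omega> = t} = 0)"

definition in_Sstar :: "'w measure \<Rightarrow> ('w \<Rightarrow> 'a) \<Rightarrow> 'a measure \<Rightarrow> ('a \<Rightarrow> real) \<Rightarrow> real \<Rightarrow> ('a \<Rightarrow> real) \<Rightarrow> bool" where
  "in_Sstar M X N eta u0 s' \<longleftrightarrow>
     (\<forall>x \<in> Cset M X N eta u0. s' x = eta x) \<and>
     (\<forall>x \<in> space N - Cset M X N eta u0. s' x < (INF y \<in> Cset M X N eta u0. eta y))"

end

theory Submission
  imports Defs "HOL-Probability.Conditional_Expectation"
begin

(*
  Write F for the cdf of s(X) and U = F(s(X)). When s(X) is atomless, U is uniform on [0, 1]: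
  every superlevel set {U > a} has probability 1 - a.

  For (1): since E(1{Y = 1} | X) = eta(X), the level sets of the integrand Phi(U) 1{Y = 1} of W
  have mass P(U > a, Y = 1) = E(eta(X); U > a), and by the Neyman-Pearson lemma this is at most
  E(eta(X); eta(X) > c) for the superlevel set of eta(X) of the same probability 1 - a. The
  layer-cake formula turns this comparison of level sets into W(s, u0) <= W(eta, u0). A score
  in S* coincides with eta above the quantile Q(eta, 1 - u0) and stays below that level
  elsewhere, so it has the same integrand as eta.

  For (2), up to a null set the integrand is F(s(X)) 1_A with A = {s(X) >= Q(s, 1 - u0), Y = 1},
  and F(s(X)) is the probability that an independent copy satisfies s(X') < s(X). Integrating
  over A and splitting the copy (X', Y') into negatives, positives below the threshold and
  points of A gives p W = p (1 - p) LocAUC + b (p - b) + b^2 / 2 with b = p beta; the last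
  term is half the mass of A x A, by exchangeability of the two copies.
*)

definition rv_cdf :: "'w measure \<Rightarrow> ('w \<Rightarrow> real) \<Rightarrow> real \<Rightarrow> real" where
  "rv_cdf M f t = measure M {\<omega> \<in> space M. f \<omega> \<le> t}"

definition rv_quantile :: "'w measure \<Rightarrow> ('w \<Rightarrow> real) \<Rightarrow> real \<Rightarrow> real" where
  "rv_quantile M f v = Inf {t. v \<le> rv_cdf M f t}"

definition W_integral :: "'w measure \<Rightarrow> ('w \<Rightarrow> real) \<Rightarrow> 'w set \<Rightarrow> real \<Rightarrow> real" where
  "W_integral M g L u0 = (\<integral>\<omega>. PhiW u0 (rv_cdf M g (g \<omega>)) * indicator L \<omega> \<partial>M)"

lemma continuous_cdf_superlevel:
  fixes F :: "real \<Rightarrow> real"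
  assumes cont: "continuous_on UNIV F" and mono: "mono F"
    and bot: "(F \<longlongrightarrow> 0) at_bot" and top: "(F \<longlongrightarrow> 1) at_top" and a: "0 < a" "a < 1"
  defines "Q \<equiv> Inf {t. a \<le> F t}"
  shows "a \<le> F t \<longleftrightarrow> Q \<le> t" and "F Q = a"
proof -
  obtain t1 where "\<forall>t\<ge>t1. a < F t"
    using order_tendstoD(1)[OF top \<open>a < 1\<close>] by (auto simp: eventually_at_top_linorder)
  then have t1: "a \<le> F t1" by auto
  obtain t0 where t0: "\<And>t. t \<le> t0 \<Longrightarrow> F t < a"
    using order_tendstoD(2)[OF bot \<open>0 < a\<close>] by (auto simp: eventually_at_bot_linorder)
  have above_t0: "t0 \<le> t" if "a \<le> F t" for t
    using that t0[of t] by linarith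
  then have bdd: "bdd_below {t. a \<le> F t}" by (intro bdd_belowI[of _ t0]) simp
  have "Q \<in> {t. a \<le> F t}"
    unfolding Q_def using t1 bdd
    by (intro closed_contains_Inf closed_Collect_le continuous_on_const cont) auto
  then have FQ: "a \<le> F Q" by simp
  show iff: "a \<le> F t \<longleftrightarrow> Q \<le> t" for t
  proof
    show "a \<le> F t \<Longrightarrow> Q \<le> t" unfolding Q_def using bdd by (simp add: cInf_lower)
    show "Q \<le> t \<Longrightarrow> a \<le> F t" using FQ monoD[OF mono] by (meson order_trans)
  qed
  obtain x where "t0 \<le> x" "x \<le> Q" "F x = a"
    using IVT'[of F t0 a Q] t0[of t0] FQ above_t0[OF FQ] continuous_on_subset[OF cont] by auto
  then show "F Q = a" using iff[of x] by simp
qed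

lemma continuous_cdf_strict_superlevel:
  fixes F :: "real \<Rightarrow> real"
  assumes cont: "continuous_on UNIV F" and mono: "mono F"
    and bot: "(F \<longlongrightarrow> 0) at_bot" and top: "(F \<longlongrightarrow> 1) at_top" and a: "0 < a" "a < 1"
  obtains S where "F S = a" and "\<And>t. a < F t \<longleftrightarrow> S < t"
proof -
  obtain t1 where t1: "\<And>t. t1 \<le> t \<Longrightarrow> a < F t"
    using order_tendstoD(1)[OF top \<open>a < 1\<close>] by (auto simp: eventually_at_top_linorder)
  obtain t0 where "\<forall>t\<le>t0. F t < a"
    using order_tendstoD(2)[OF bot \<open>0 < a\<close>] by (auto simp: eventually_at_bot_linorder)
  then have t0: "F t0 \<le> a" by auto
  have below_t1: "t \<le> t1" if "F t \<le> a" for t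
    using that t1[of t] by linarith
  then have bdd: "bdd_above {t. F t \<le> a}" by (intro bdd_aboveI[of _ t1]) simp
  define S where "S = Sup {t. F t \<le> a}"
  have "S \<in> {t. F t \<le> a}"
    unfolding S_def using t0 bdd
    by (intro closed_contains_Sup closed_Collect_le continuous_on_const cont) auto
  then have FS: "F S \<le> a" by simp
  have iff: "a < F t \<longleftrightarrow> S < t" for t
  proof
    show "S < t \<Longrightarrow> a < F t" unfolding S_def using bdd by (meson cSup_upper linorder_not_le mem_Collect_eq)
    show "a < F t \<Longrightarrow> S < t" using FS monoD[OF mono, of t S] by linarith
  qed
  obtain x where "S \<le> x" "x \<le> t1" "F x = a"
    using IVT'[of F S a t1] t1[of t1] FS below_t1[OF FS] continuous_on_subset[OF cont] by auto
  then have "F S = a" using iff[of x] by simp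
  then show ?thesis using iff by (rule that)
qed

lemma (in finite_measure) mono_rv_cdf: "f \<in> borel_measurable M \<Longrightarrow> mono (rv_cdf M f)"
  unfolding rv_cdf_def mono_def by (auto intro!: finite_measure_mono)

lemma (in finite_measure) borel_measurable_rv_cdf[measurable]:
  "f \<in> borel_measurable M \<Longrightarrow> rv_cdf M f \<in> borel_measurable borel"
  using borel_measurable_mono mono_rv_cdf by blast

lemma (in prob_space) atomless_rv_cdf:
  assumes f: "f \<in> borel_measurable M" and atomless: "atomless_rv M f"
  shows "continuous_on UNIV (rv_cdf M f)" "mono (rv_cdf M f)"
    "(rv_cdf M f \<longlongrightarrow> 0) at_bot" "(rv_cdf M f \<longlongrightarrow> 1) at_top"
proof -
  interpret D: real_distribution "distr M borel f"
    using f by (simp add: real_distribution_def real_distribution_axioms_def prob_space_distr)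
  have rv_cdf: "rv_cdf M f = cdf (distr M borel f)"
  proof
    fix t
    have "f -` {..t} \<inter> space M = {\<omega> \<in> space M. f \<omega> \<le> t}" by auto
    then show "rv_cdf M f t = cdf (distr M borel f) t"
      using f by (simp add: rv_cdf_def cdf_def measure_distr)
  qed
  have "measure (distr M borel f) {t} = 0" for t
  proof -
    have "f -` {t} \<inter> space M = {\<omega> \<in> space M. f \<omega> = t}" by auto
    then show ?thesis using atomless f by (simp add: atomless_rv_def measure_distr)
  qed
  then show "continuous_on UNIV (rv_cdf M f)"
    unfolding rv_cdf by (simp add: D.isCont_cdf continuous_at_imp_continuous_on)
  show "mono (rv_cdf M f)" by (rule mono_rv_cdf[OF f])
  show "(rv_cdf M f \<longlongrightarrow> 0) at_bot" "(rv_cdf M f \<longlongrightarrow> 1) at_top"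
    unfolding rv_cdf by (rule D.cdf_lim_at_bot D.cdf_lim_at_top_prob)+
qed

lemma (in prob_space) measure_less_eq_rv_cdf:
  assumes f[measurable]: "f \<in> borel_measurable M" and "atomless_rv M f"
  shows "measure M {\<omega> \<in> space M. f \<omega> < t} = rv_cdf M f t"
proof -
  have "rv_cdf M f t = measure M ({\<omega> \<in> space M. f \<omega> < t} \<union> {\<omega> \<in> space M. f \<omega> = t})"
    unfolding rv_cdf_def by (intro arg_cong[where f="measure M"]) auto
  also have "\<dots> = measure M {\<omega> \<in> space M. f \<omega> < t} + measure M {\<omega> \<in> space M. f \<omega> = t}"
    by (intro finite_measure_Union) auto
  finally show ?thesis using \<open>atomless_rv M f\<close> by (simp add: atomless_rv_def)
qed

lemma (in prob_space) measure_between_eq_rv_cdf: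
  assumes f[measurable]: "f \<in> borel_measurable M" and "atomless_rv M f" and "a \<le> b"
  shows "measure M {\<omega> \<in> space M. a \<le> f \<omega> \<and> f \<omega> \<le> b} = rv_cdf M f b - rv_cdf M f a"
proof -
  have "measure M {\<omega> \<in> space M. a \<le> f \<omega> \<and> f \<omega> \<le> b}
      = measure M ({\<omega> \<in> space M. f \<omega> \<le> b} - {\<omega> \<in> space M. f \<omega> < a})"
    by (intro arg_cong[where f="measure M"]) auto
  also have "\<dots> = rv_cdf M f b - measure M {\<omega> \<in> space M. f \<omega> < a}"
    unfolding rv_cdf_def using \<open>a \<le> b\<close> by (intro finite_measure_Diff) auto
  finally show ?thesis using measure_less_eq_rv_cdf[OF assms(1,2)] by simp
qed

lemma (in prob_space) measure_rv_cdf_greater: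
  assumes f[measurable]: "f \<in> borel_measurable M" and "atomless_rv M f" and "0 < a" "a < 1"
  shows "measure M {\<omega> \<in> space M. a < rv_cdf M f (f \<omega>)} = 1 - a"
proof -
  obtain S where S: "rv_cdf M f S = a" "\<And>t. a < rv_cdf M f t \<longleftrightarrow> S < t"
    using continuous_cdf_strict_superlevel[OF atomless_rv_cdf[OF assms(1,2)] assms(3,4)] by blast
  have "measure M {\<omega> \<in> space M. a < rv_cdf M f (f \<omega>)} = measure M (space M - {\<omega> \<in> space M. f \<omega> \<le> S})"
    unfolding S(2) by (intro arg_cong[where f="measure M"]) auto
  also have "\<dots> = 1 - a"
    using S(1) by (subst prob_compl) (auto simp: rv_cdf_def)
  finally show ?thesis .
qed

lemma less_PhiW_iff:
  assumes "0 \<le> r" and "v \<le> 1"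
  shows "r < PhiW u0 v \<longleftrightarrow> r < 1 \<and> max r (1 - u0) < v"
  using assms by (auto simp: PhiW_def)

lemma PhiW_measurable[measurable]: "PhiW u0 \<in> borel_measurable borel"
  unfolding PhiW_def by measurable

lemma (in sigma_finite_measure) nn_integral_layer_cake:
  fixes f :: "'a \<Rightarrow> real"
  assumes f[measurable]: "f \<in> borel_measurable M" and nonneg: "\<And>\<omega>. \<omega> \<in> space M \<Longrightarrow> 0 \<le> f \<omega>"
  shows "(\<integral>\<^sup>+\<omega>. f \<omega> \<partial>M) = (\<integral>\<^sup>+r. indicator {0..} r * emeasure M {\<omega> \<in> space M. r < f \<omega>} \<partial>lborel)"
proof -
  interpret pair_sigma_finite M lborel ..
  have "(\<integral>\<^sup>+\<omega>. f \<omega> \<partial>M) = (\<integral>\<^sup>+\<omega>. (\<integral>\<^sup>+r. indicator {0..<f \<omega>} r \<partial>lborel) \<partial>M)"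
    using nonneg by (intro nn_integral_cong) simp
  also have "\<dots> = (\<integral>\<^sup>+r. (\<integral>\<^sup>+\<omega>. indicator {0..<f \<omega>} r \<partial>M) \<partial>lborel)"
  proof -
    have "(\<lambda>(\<omega>, r). indicator {0..<f \<omega>} r :: ennreal) = (\<lambda>p. if 0 \<le> snd p \<and> snd p < f (fst p) then 1 else 0)"
      by (auto simp: fun_eq_iff indicator_def)
    then have "(\<lambda>(\<omega>, r). indicator {0..<f \<omega>} r :: ennreal) \<in> borel_measurable (M \<Otimes>\<^sub>M lborel)"
      by simp
    then show ?thesis by (simp add: Fubini')
  qed
  also have "\<dots> = (\<integral>\<^sup>+r. indicator {0..} r * emeasure M {\<omega> \<in> space M. r < f \<omega>} \<partial>lborel)"
  proof (intro nn_integral_cong)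
    fix r :: real
    have "(\<integral>\<^sup>+\<omega>. indicator {0..<f \<omega>} r \<partial>M) = (\<integral>\<^sup>+\<omega>. indicator {0..} r * indicator {\<omega> \<in> space M. r < f \<omega>} \<omega> \<partial>M)"
      by (intro nn_integral_cong) (auto simp: indicator_def)
    then show "(\<integral>\<^sup>+\<omega>. indicator {0..<f \<omega>} r \<partial>M) = indicator {0..} r * emeasure M {\<omega> \<in> space M. r < f \<omega>}"
      by (simp add: nn_integral_cmult_indicator)
  qed
  finally show ?thesis .
qed

lemma (in finite_measure) integral_mono_level_sets:
  fixes f g :: "'a \<Rightarrow> real"
  assumes f: "integrable M f" "\<And>\<omega>. \<omega> \<in> space M \<Longrightarrow> 0 \<le> f \<omega>"
    and g: "integrable M g" "\<And>\<omega>. \<omega> \<in> space M \<Longrightarrow> 0 \<le> g \<omega>"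
    and le: "\<And>r. 0 \<le> r \<Longrightarrow> measure M {\<omega> \<in> space M. r < f \<omega>} \<le> measure M {\<omega> \<in> space M. r < g \<omega>}"
  shows "integral\<^sup>L M f \<le> integral\<^sup>L M g"
proof -
  have [measurable]: "f \<in> borel_measurable M" "g \<in> borel_measurable M" using f g by auto
  have "ennreal (integral\<^sup>L M f) = (\<integral>\<^sup>+\<omega>. f \<omega> \<partial>M)"
    using f by (intro nn_integral_eq_integral[symmetric] AE_I2) auto
  also have "\<dots> = (\<integral>\<^sup>+r. indicator {0..} r * emeasure M {\<omega> \<in> space M. r < f \<omega>} \<partial>lborel)"
    using f by (intro nn_integral_layer_cake) auto
  also have "\<dots> \<le> (\<integral>\<^sup>+r. indicator {0..} r * emeasure M {\<omega> \<in> space M. r < g \<omega>} \<partial>lborel)"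
    using le by (intro nn_integral_mono) (auto simp: indicator_def emeasure_eq_measure)
  also have "\<dots> = (\<integral>\<^sup>+\<omega>. g \<omega> \<partial>M)"
    using g by (intro nn_integral_layer_cake[symmetric]) auto
  also have "\<dots> = ennreal (integral\<^sup>L M g)"
    using g by (intro nn_integral_eq_integral AE_I2) auto
  finally show ?thesis using g by (simp add: integral_nonneg)
qed

lemma (in finite_measure) integral_indicator_le_superlevel:
  fixes e :: "'a \<Rightarrow> real"
  assumes e: "integrable M e" and G[measurable]: "G \<in> sets M"
    and same_measure: "measure M G = measure M {\<omega> \<in> space M. c < e \<omega>}"
  shows "(\<integral>\<omega>. e \<omega> * indicator G \<omega> \<partial>M) \<le> (\<integral>\<omega>. e \<omega> * indicator {\<omega> \<in> space M. c < e \<omega>} \<omega> \<partial>M)"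
    (is "_ \<le> (\<integral>\<omega>. e \<omega> * indicator ?H \<omega> \<partial>M)")
proof -
  have [measurable]: "e \<in> borel_measurable M" using e by simp
  have H: "?H \<in> sets M" by measurable
  have integrable: "integrable M (\<lambda>\<omega>. e \<omega> * indicator A \<omega>)" "integrable M (indicator A :: 'a \<Rightarrow> real)"
    if "A \<in> sets M" for A
    using that e
    by (auto intro!: integrable_real_mult_indicator integrable_real_indicator simp: less_top[symmetric])
  have "integrable M (\<lambda>\<omega>. e \<omega> * indicator ?H \<omega> + c * (indicator G \<omega> - indicator ?H \<omega>))"
    using integrable[OF G] integrable[OF H] by auto
  then have "(\<integral>\<omega>. e \<omega> * indicator G \<omega> \<partial>M) \<le> (\<integral>\<omega>. e \<omega> * indicator ?H \<omega> + c * (indicator G \<omega> - indicator ?H \<omega>) \<partial>M)"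
    using integrable[OF G] by (intro integral_mono) (auto simp: indicator_def)
  also have "\<dots> = (\<integral>\<omega>. e \<omega> * indicator ?H \<omega> \<partial>M) + c * (measure M G - measure M ?H)"
    using integrable G H by simp
  finally show ?thesis using same_measure by simp
qed

lemma (in prob_space) W_integrand_greater_eq:
  assumes "0 \<le> r" and "L \<subseteq> space M"
  shows "{\<omega> \<in> space M. r < PhiW u0 (rv_cdf M g (g \<omega>)) * indicator L \<omega>}
       = (if r < 1 then {\<omega> \<in> space M. max r (1 - u0) < rv_cdf M g (g \<omega>)} \<inter> L else {})"
proof -
  have "rv_cdf M g t \<le> 1" for t by (simp add: rv_cdf_def)
  then show ?thesis using assms by (auto simp: less_PhiW_iff indicator_def)
qed

lemma (in prob_space) measure_cdf_greater_Int_le_regression: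
  fixes g e :: "'a \<Rightarrow> real"
  assumes F: "subalgebra M F"
    and g: "g \<in> borel_measurable F" "atomless_rv M g"
    and e: "e \<in> borel_measurable F" "atomless_rv M e" "\<And>\<omega>. \<omega> \<in> space M \<Longrightarrow> 0 \<le> e \<omega> \<and> e \<omega> \<le> 1"
    and L: "L \<in> sets M"
    and regression: "\<And>B. B \<in> sets F \<Longrightarrow> measure M (B \<inter> L) = (\<integral>\<omega>. e \<omega> * indicator B \<omega> \<partial>M)"
    and a: "0 < a" "a < 1"
  shows "measure M ({\<omega> \<in> space M. a < rv_cdf M g (g \<omega>)} \<inter> L)
    \<le> measure M ({\<omega> \<in> space M. a < rv_cdf M e (e \<omega>)} \<inter> L)"
proof -
  have [measurable]: "g \<in> borel_measurable M" "e \<in> borel_measurable M"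
    using F g e by (auto intro: measurable_from_subalg)
  have superlevel_F: "{\<omega> \<in> space M. a < rv_cdf M h (h \<omega>)} \<in> sets F"
    if "h \<in> borel_measurable F" "h \<in> borel_measurable M" for h
  proof -
    have [measurable]: "h \<in> borel_measurable F" "rv_cdf M h \<in> borel_measurable borel"
      using that by auto
    have "{\<omega> \<in> space F. a < rv_cdf M h (h \<omega>)} \<in> sets F" by measurable
    moreover have "space F = space M" using F by (simp add: subalgebra_def)
    ultimately show ?thesis by simp
  qed
  obtain S where S: "\<And>t. a < rv_cdf M e t \<longleftrightarrow> S < t"
    using continuous_cdf_strict_superlevel[OF atomless_rv_cdf[OF _ e(2)] a] by auto
  have superlevel_e: "{\<omega> \<in> space M. a < rv_cdf M e (e \<omega>)} = {\<omega> \<in> space M. S < e \<omega>}"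
    unfolding S ..
  have "measure M ({\<omega> \<in> space M. a < rv_cdf M g (g \<omega>)} \<inter> L)
      = (\<integral>\<omega>. e \<omega> * indicator {\<omega> \<in> space M. a < rv_cdf M g (g \<omega>)} \<omega> \<partial>M)"
    using superlevel_F g by (intro regression) auto
  also have "\<dots> \<le> (\<integral>\<omega>. e \<omega> * indicator {\<omega> \<in> space M. S < e \<omega>} \<omega> \<partial>M)"
  proof (rule integral_indicator_le_superlevel)
    show "integrable M e"
      using e(3) by (intro integrable_const_bound[where B=1]) auto
    show "measure M {\<omega> \<in> space M. a < rv_cdf M g (g \<omega>)} = measure M {\<omega> \<in> space M. S < e \<omega>}"
      using measure_rv_cdf_greater[OF _ g(2) a] measure_rv_cdf_greater[OF _ e(2) a]
      unfolding superlevel_e by simp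
  qed measurable
  also have "\<dots> = measure M ({\<omega> \<in> space M. a < rv_cdf M e (e \<omega>)} \<inter> L)"
    unfolding superlevel_e[symmetric] using superlevel_F e by (intro regression[symmetric]) auto
  finally show ?thesis .
qed

lemma (in prob_space) W_integral_le_regression:
  fixes g e :: "'a \<Rightarrow> real"
  assumes F: "subalgebra M F"
    and g: "g \<in> borel_measurable F" "atomless_rv M g"
    and e: "e \<in> borel_measurable F" "atomless_rv M e" "\<And>\<omega>. \<omega> \<in> space M \<Longrightarrow> 0 \<le> e \<omega> \<and> e \<omega> \<le> 1"
    and L[measurable]: "L \<in> sets M"
    and regression: "\<And>B. B \<in> sets F \<Longrightarrow> measure M (B \<inter> L) = (\<integral>\<omega>. e \<omega> * indicator B \<omega> \<partial>M)"
    and u0: "0 < u0" "u0 < 1"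
  shows "W_integral M g L u0 \<le> W_integral M e L u0"
proof -
  have [measurable]: "g \<in> borel_measurable M" "e \<in> borel_measurable M"
    using F g e by (auto intro: measurable_from_subalg)
  have integrand_bounds:
    "0 \<le> PhiW u0 (rv_cdf M h (h \<omega>)) * indicator L \<omega> \<and> PhiW u0 (rv_cdf M h (h \<omega>)) * indicator L \<omega> \<le> 1"
    for h \<omega>
  proof -
    have "0 \<le> rv_cdf M h t \<and> rv_cdf M h t \<le> 1" for t by (simp add: rv_cdf_def)
    then show ?thesis by (auto simp: PhiW_def indicator_def)
  qed
  have integrable: "integrable M (\<lambda>\<omega>. PhiW u0 (rv_cdf M h (h \<omega>)) * indicator L \<omega>)"
    if [measurable]: "h \<in> borel_measurable M" for h
    using integrand_bounds by (intro integrable_const_bound[where B=1]) auto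
  show ?thesis
    unfolding W_integral_def
  proof (rule integral_mono_level_sets)
    fix r :: real assume r: "0 \<le> r"
    define a where "a = max r (1 - u0)"
    have "0 < a" "r < 1 \<Longrightarrow> a < 1" using u0 by (auto simp: a_def)
    then show "measure M {\<omega> \<in> space M. r < PhiW u0 (rv_cdf M g (g \<omega>)) * indicator L \<omega>}
        \<le> measure M {\<omega> \<in> space M. r < PhiW u0 (rv_cdf M e (e \<omega>)) * indicator L \<omega>}"
      unfolding W_integrand_greater_eq[of r L u0, OF r sets.sets_into_space[OF L], folded a_def]
      using measure_cdf_greater_Int_le_regression[OF F g e L regression] by simp
  qed (use integrable integrand_bounds in auto)
qed

lemma in_SstarD:
  assumes "in_Sstar M X N eta u0 s'"
  shows "\<And>y. y \<in> Cset M X N eta u0 \<Longrightarrow> s' y = eta y"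
    and "\<And>y z. y \<in> space N - Cset M X N eta u0 \<Longrightarrow> z \<in> Cset M X N eta u0 \<Longrightarrow> s' y < eta z"
proof -
  let ?C = "Cset M X N eta u0"
  show "s' y = eta y" if "y \<in> ?C" for y
    using assms that by (simp add: in_Sstar_def)
  show "s' y < eta z" if "y \<in> space N - ?C" "z \<in> ?C" for y z
  proof -
    have "(INF z \<in> ?C. eta z) \<le> eta z"
      using that(2) by (intro cINF_lower bdd_belowI[of _ "Qf M X eta (1 - u0)"]) (auto simp: Cset_def)
    moreover have "s' y < (INF z \<in> ?C. eta z)" using assms that(1) by (simp add: in_Sstar_def)
    ultimately show ?thesis by linarith
  qed
qed

lemma PhiW_cdfS_Sstar_eq:
  assumes "prob_space M" and X[measurable]: "X \<in> measurable M N"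
    and [measurable]: "eta \<in> borel_measurable N" "s' \<in> borel_measurable N"
    and atomless: "atomless_rv M (\<lambda>\<omega>. eta (X \<omega>))" and u0: "0 < u0" "u0 < 1"
    and Sstar: "in_Sstar M X N eta u0 s'" and x: "x \<in> space N"
  shows "PhiW u0 (cdfS M X s' (s' x)) = PhiW u0 (cdfS M X eta (eta x))"
proof -
  interpret prob_space M by fact
  define Q where "Q = Qf M X eta (1 - u0)"
  define C where "C = Cset M X N eta u0"
  have C_eq: "C = {y \<in> space N. Q \<le> eta y}" by (simp add: C_def Cset_def Q_def)
  note on_C = in_SstarD(1)[OF Sstar, folded C_def] and off_C = in_SstarD(2)[OF Sstar, folded C_def]
  have cdfS_eta: "cdfS M X eta = rv_cdf M (\<lambda>\<omega>. eta (X \<omega>))"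
    by (simp add: fun_eq_iff cdfS_def rv_cdf_def)
  have eta_X: "(\<lambda>\<omega>. eta (X \<omega>)) \<in> borel_measurable M" by measurable
  have level: "0 < 1 - u0" "1 - u0 < 1" using u0 by auto
  note quantile = continuous_cdf_superlevel[OF atomless_rv_cdf[OF eta_X atomless] level,
      folded cdfS_eta, folded Qf_def, folded Q_def]
  have cdfS_le: "cdfS M X s' t \<le> cdfS M X eta u" if "\<And>y. y \<in> space N \<Longrightarrow> s' y \<le> t \<Longrightarrow> eta y \<le> u" for t u
    unfolding cdfS_def using that measurable_space[OF X] by (intro finite_measure_mono) auto
  show ?thesis
  proof (cases "x \<in> C")
    case True
    have "s' y \<le> eta x \<longleftrightarrow> eta y \<le> eta x" if "y \<in> space N" for y
      using that on_C[of y] off_C[of y x] True C_eq by (cases "y \<in> C") auto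
    then have "cdfS M X s' (eta x) = cdfS M X eta (eta x)"
      unfolding cdfS_def using measurable_space[OF X] by (intro arg_cong[where f="measure M"]) auto
    then show ?thesis using on_C[OF True] by simp
  next
    case False
    have "cdfS M X s' (s' x) \<le> cdfS M X eta Q"
    proof (rule cdfS_le)
      fix y assume "y \<in> space N" "s' y \<le> s' x"
      then have "y \<notin> C" using off_C[of x y] False x on_C[of y] by force
      then show "eta y \<le> Q" using \<open>y \<in> space N\<close> C_eq by auto
    qed
    moreover have "\<not> 1 - u0 \<le> cdfS M X eta (eta x)" using False x quantile(1) C_eq by auto
    ultimately show ?thesis using quantile(2) u0 by (auto simp: PhiW_def)
  qed
qed

lemma (in pair_prob_space) measure_pair_measure_Times:
  assumes "A \<in> sets M1" "B \<in> sets M2"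
  shows "measure (M1 \<Otimes>\<^sub>M M2) (A \<times> B) = measure M1 A * measure M2 B"
  using assms by (simp add: measure_def M2.emeasure_pair_measure_Times enn2real_mult)

lemma (in pair_prob_space) measure_pair_measure_Collect:
  assumes "{p \<in> space (M1 \<Otimes>\<^sub>M M2). P (fst p) (snd p)} \<in> sets (M1 \<Otimes>\<^sub>M M2)"
  shows "measure (M1 \<Otimes>\<^sub>M M2) {p \<in> space (M1 \<Otimes>\<^sub>M M2). P (fst p) (snd p)}
       = (\<integral>x. measure M2 {y \<in> space M2. P x y} \<partial>M1)"
proof -
  define E where "E = {p \<in> space (M1 \<Otimes>\<^sub>M M2). P (fst p) (snd p)}"
  have E: "E \<in> sets (M1 \<Otimes>\<^sub>M M2)" using assms by (simp add: E_def)
  have Pair_vimage: "Pair x -` E = {y \<in> space M2. P x y}" if "x \<in> space M1" for x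
    using that by (auto simp: E_def space_pair_measure)
  have "(\<lambda>x. measure M2 {y \<in> space M2. P x y}) \<in> borel_measurable M1"
    by (rule measurable_cong[THEN iffD1, OF _ borel_measurable_enn2real[OF M2.measurable_emeasure_Pair[OF E]]])
      (simp add: Pair_vimage measure_def)
  then have integrable: "integrable M1 (\<lambda>x. measure M2 {y \<in> space M2. P x y})"
    by (intro M1.integrable_const_bound[where B=1]) auto
  have "ennreal (measure (M1 \<Otimes>\<^sub>M M2) E) = (\<integral>\<^sup>+x. emeasure M2 (Pair x -` E) \<partial>M1)"
    by (simp add: P.emeasure_eq_measure[symmetric] M2.emeasure_pair_measure_alt[OF E])
  also have "\<dots> = (\<integral>\<^sup>+x. ennreal (measure M2 {y \<in> space M2. P x y}) \<partial>M1)"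
    by (intro nn_integral_cong) (simp add: Pair_vimage M2.emeasure_eq_measure)
  also have "\<dots> = ennreal (\<integral>x. measure M2 {y \<in> space M2. P x y} \<partial>M1)"
    by (intro nn_integral_eq_integral integrable) simp
  finally show ?thesis by (simp add: integral_nonneg E_def)
qed

lemma (in prob_space) measure_pair_swap:
  assumes "{p \<in> space (M \<Otimes>\<^sub>M M). P (fst p) (snd p)} \<in> sets (M \<Otimes>\<^sub>M M)"
  shows "measure (M \<Otimes>\<^sub>M M) {p \<in> space (M \<Otimes>\<^sub>M M). P (fst p) (snd p)}
       = measure (M \<Otimes>\<^sub>M M) {p \<in> space (M \<Otimes>\<^sub>M M). P (snd p) (fst p)}"
proof -
  interpret pair_prob_space M M by unfold_locales
  have "measure (M \<Otimes>\<^sub>M M) {p \<in> space (M \<Otimes>\<^sub>M M). P (fst p) (snd p)}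
      = measure (distr (M \<Otimes>\<^sub>M M) (M \<Otimes>\<^sub>M M) (\<lambda>(x, y). (y, x))) {p \<in> space (M \<Otimes>\<^sub>M M). P (fst p) (snd p)}"
    by (simp add: distr_pair_swap[symmetric])
  also have "\<dots> = measure (M \<Otimes>\<^sub>M M) {p \<in> space (M \<Otimes>\<^sub>M M). P (snd p) (fst p)}"
    using assms
    by (subst measure_distr) (auto intro!: arg_cong[where f="measure (M \<Otimes>\<^sub>M M)"] simp: space_pair_measure)
  finally show ?thesis .
qed

lemma (in prob_space) measure_pair_less_half:
  fixes g :: "'a \<Rightarrow> real"
  assumes g[measurable]: "g \<in> borel_measurable M" and "atomless_rv M g" and A[measurable]: "A \<in> sets M"
  shows "measure (M \<Otimes>\<^sub>M M) {p \<in> space (M \<Otimes>\<^sub>M M). fst p \<in> A \<and> snd p \<in> A \<and> g (snd p) < g (fst p)}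
       = (measure M A)\<^sup>2 / 2"
proof -
  interpret MM: pair_prob_space M M by unfold_locales
  define less where "less = {p \<in> space (M \<Otimes>\<^sub>M M). fst p \<in> A \<and> snd p \<in> A \<and> g (snd p) < g (fst p)}"
  define greater where "greater = {p \<in> space (M \<Otimes>\<^sub>M M). snd p \<in> A \<and> fst p \<in> A \<and> g (fst p) < g (snd p)}"
  define diag where "diag = {p \<in> space (M \<Otimes>\<^sub>M M). fst p \<in> A \<and> snd p \<in> A \<and> g (fst p) = g (snd p)}"
  have sets[measurable]: "less \<in> sets (M \<Otimes>\<^sub>M M)" "greater \<in> sets (M \<Otimes>\<^sub>M M)" "diag \<in> sets (M \<Otimes>\<^sub>M M)"
    unfolding less_def greater_def diag_def by measurable
  have "measure (M \<Otimes>\<^sub>M M) less = measure (M \<Otimes>\<^sub>M M) greater"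
    unfolding less_def greater_def
    by (rule measure_pair_swap[where P="\<lambda>x y. x \<in> A \<and> y \<in> A \<and> g y < g x"]) measurable
  moreover have "measure (M \<Otimes>\<^sub>M M) diag = 0"
  proof -
    have null: "measure M {y \<in> space M. x \<in> A \<and> y \<in> A \<and> g x = g y} = 0" for x
    proof -
      have "measure M {y \<in> space M. x \<in> A \<and> y \<in> A \<and> g x = g y} \<le> measure M {y \<in> space M. g y = g x}"
        by (intro finite_measure_mono) auto
      then show ?thesis using \<open>atomless_rv M g\<close> by (simp add: atomless_rv_def measure_le_0_iff)
    qed
    have "measure (M \<Otimes>\<^sub>M M) diag = (\<integral>x. measure M {y \<in> space M. x \<in> A \<and> y \<in> A \<and> g x = g y} \<partial>M)"
      unfolding diag_def
      by (rule MM.measure_pair_measure_Collect[where P="\<lambda>x y. x \<in> A \<and> y \<in> A \<and> g x = g y"]) measurable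
    then show ?thesis using null by simp
  qed
  moreover have "measure M A * measure M A = measure (M \<Otimes>\<^sub>M M) (less \<union> greater \<union> diag)"
    using sets.sets_into_space[OF A]
    by (simp add: MM.measure_pair_measure_Times[symmetric])
      (intro arg_cong[where f="measure (M \<Otimes>\<^sub>M M)"], auto simp: less_def greater_def diag_def space_pair_measure)
  moreover have "\<dots> = measure (M \<Otimes>\<^sub>M M) less + measure (M \<Otimes>\<^sub>M M) greater + measure (M \<Otimes>\<^sub>M M) diag"
    using sets by (subst MM.finite_measure_Union, auto simp: less_def greater_def diag_def
      intro!: MM.finite_measure_Union)
  ultimately show ?thesis by (simp add: less_def power2_eq_square)
qed

lemma (in prob_space) W_integral_eq_integral_cdf:
  fixes g :: "'a \<Rightarrow> real"
  assumes g[measurable]: "g \<in> borel_measurable M" and atomless: "atomless_rv M g"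
    and L[measurable]: "L \<in> sets M" and u0: "0 < u0" "u0 < 1"
  shows "W_integral M g L u0
    = (\<integral>\<omega>. rv_cdf M g (g \<omega>) * indicator {\<omega> \<in> L. rv_quantile M g (1 - u0) \<le> g \<omega>} \<omega> \<partial>M)"
proof -
  define Q where "Q = rv_quantile M g (1 - u0)"
  have a: "0 < 1 - u0" "1 - u0 < 1" using u0 by auto
  note cdf = atomless_rv_cdf[OF g atomless]
  have Q: "rv_cdf M g Q = 1 - u0" "\<And>t. 1 - u0 \<le> rv_cdf M g t \<longleftrightarrow> Q \<le> t"
    unfolding Q_def rv_quantile_def by (rule continuous_cdf_superlevel[OF cdf a])+
  obtain S where S: "rv_cdf M g S = 1 - u0" "\<And>t. 1 - u0 < rv_cdf M g t \<longleftrightarrow> S < t"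
    using continuous_cdf_strict_superlevel[OF cdf a] by blast
  \<comment> \<open>{F(g) > 1 - u0} = {g > S} differs from {g \<ge> Q} only on the null set {Q \<le> g \<le> S}.\<close>
  have "Q \<le> S" using S(2)[of Q] Q(1) by linarith
  then have "measure M {\<omega> \<in> space M. Q \<le> g \<omega> \<and> g \<omega> \<le> S} = 0"
    using Q(1) S(1) by (simp add: measure_between_eq_rv_cdf[OF g atomless])
  then have null: "{\<omega> \<in> space M. Q \<le> g \<omega> \<and> g \<omega> \<le> S} \<in> null_sets M"
    by (intro null_setsI) (simp_all add: emeasure_eq_measure)
  have "W_integral M g L u0 = (\<integral>\<omega>. rv_cdf M g (g \<omega>) * indicator {\<omega> \<in> L. S < g \<omega>} \<omega> \<partial>M)"
    unfolding W_integral_def PhiW_def S(2) by (intro Bochner_Integration.integral_cong) (auto simp: indicator_def)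
  also have "\<dots> = (\<integral>\<omega>. rv_cdf M g (g \<omega>) * indicator {\<omega> \<in> L. Q \<le> g \<omega>} \<omega> \<partial>M)"
  proof (rule integral_cong_AE)
    show "AE \<omega> in M. rv_cdf M g (g \<omega>) * indicator {\<omega> \<in> L. S < g \<omega>} \<omega>
        = rv_cdf M g (g \<omega>) * indicator {\<omega> \<in> L. Q \<le> g \<omega>} \<omega>"
      using AE_not_in[OF null]
      by eventually_elim (use \<open>Q \<le> S\<close> sets.sets_into_space[OF L] in \<open>auto simp: indicator_def\<close>)
  qed measurable
  finally show ?thesis by (simp add: Q_def)
qed

lemma (in prob_space) W_integral_decomposition:
  fixes g :: "'a \<Rightarrow> real"
  assumes g[measurable]: "g \<in> borel_measurable M" and atomless: "atomless_rv M g"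
    and L[measurable]: "L \<in> sets M" and u0: "0 < u0" "u0 < 1"
  defines "A \<equiv> {\<omega> \<in> L. rv_quantile M g (1 - u0) \<le> g \<omega>}"
  shows "W_integral M g L u0 = measure M A * measure M L - (measure M A)\<^sup>2 / 2
    + measure (M \<Otimes>\<^sub>M M) {p \<in> space (M \<Otimes>\<^sub>M M). fst p \<in> A \<and> snd p \<notin> L \<and> g (snd p) < g (fst p)}"
    (is "_ = _ + measure (M \<Otimes>\<^sub>M M) ?negatives")
proof -
  interpret MM: pair_prob_space M M by unfold_locales
  have A[measurable]: "A \<in> sets M" unfolding A_def by measurable
  have "A \<subseteq> L" by (auto simp: A_def)
  define pairs_in_A where "pairs_in_A = {p \<in> space (M \<Otimes>\<^sub>M M). fst p \<in> A \<and> snd p \<in> A \<and> g (snd p) < g (fst p)}"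
  have [measurable]: "?negatives \<in> sets (M \<Otimes>\<^sub>M M)" "pairs_in_A \<in> sets (M \<Otimes>\<^sub>M M)"
    unfolding pairs_in_A_def by measurable
  have "W_integral M g L u0 = (\<integral>\<omega>. rv_cdf M g (g \<omega>) * indicator A \<omega> \<partial>M)"
    unfolding A_def by (rule W_integral_eq_integral_cdf[OF g atomless L u0])
  also have "\<dots> = (\<integral>\<omega>. measure M {\<omega>' \<in> space M. \<omega> \<in> A \<and> g \<omega>' < g \<omega>} \<partial>M)"
    by (intro Bochner_Integration.integral_cong)
      (auto simp: measure_less_eq_rv_cdf[OF g atomless] indicator_def)
  also have "\<dots> = measure (M \<Otimes>\<^sub>M M) {p \<in> space (M \<Otimes>\<^sub>M M). fst p \<in> A \<and> g (snd p) < g (fst p)}"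
    by (rule MM.measure_pair_measure_Collect[where P="\<lambda>\<omega> \<omega>'. \<omega> \<in> A \<and> g \<omega>' < g \<omega>", symmetric]) measurable
  \<comment> \<open>A second point in L - A lies below the threshold, hence below every point of A.\<close>
  also have "{p \<in> space (M \<Otimes>\<^sub>M M). fst p \<in> A \<and> g (snd p) < g (fst p)}
      = A \<times> (L - A) \<union> ?negatives \<union> pairs_in_A"
    using sets.sets_into_space[OF L] by (auto simp: pairs_in_A_def space_pair_measure A_def)
  also have "measure (M \<Otimes>\<^sub>M M) \<dots> = measure (M \<Otimes>\<^sub>M M) (A \<times> (L - A)) + measure (M \<Otimes>\<^sub>M M) ?negatives
      + measure (M \<Otimes>\<^sub>M M) pairs_in_A"
    using \<open>A \<subseteq> L\<close>
    by (subst MM.finite_measure_Union, auto simp: pairs_in_A_def intro!: MM.finite_measure_Union)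
  also have "measure (M \<Otimes>\<^sub>M M) (A \<times> (L - A)) = measure M A * (measure M L - measure M A)"
    using \<open>A \<subseteq> L\<close> by (simp add: MM.measure_pair_measure_Times finite_measure_Diff)
  also have "measure (M \<Otimes>\<^sub>M M) pairs_in_A = (measure M A)\<^sup>2 / 2"
    unfolding pairs_in_A_def by (rule measure_pair_less_half[OF g atomless A])
  finally show ?thesis by (simp add: power2_eq_square algebra_simps)
qed

lemma measure_distr_eq_Collect:
  assumes "Z \<in> measurable M S" and "B \<in> sets S"
  shows "measure (distr M S Z) B = measure M {\<omega> \<in> space M. Z \<omega> \<in> B}"
proof -
  have "Z -` B \<inter> space M = {\<omega> \<in> space M. Z \<omega> \<in> B}" by auto
  then show ?thesis using assms by (simp add: measure_distr)
qed

lemma rv_cdf_distr: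
  assumes Z[measurable]: "Z \<in> measurable M S" and [measurable]: "h \<in> borel_measurable S"
  shows "rv_cdf (distr M S Z) h = rv_cdf M (\<lambda>\<omega>. h (Z \<omega>))"
  using measurable_space[OF Z] by (simp add: fun_eq_iff rv_cdf_def measure_distr_eq_Collect cong: conj_cong)

lemma atomless_rv_distr:
  assumes Z[measurable]: "Z \<in> measurable M S" and [measurable]: "h \<in> borel_measurable S"
  shows "atomless_rv (distr M S Z) h \<longleftrightarrow> atomless_rv M (\<lambda>\<omega>. h (Z \<omega>))"
  using measurable_space[OF Z] by (simp add: atomless_rv_def measure_distr_eq_Collect cong: conj_cong)

lemma (in prob_space) W_integral_distr:
  assumes Z[measurable]: "Z \<in> measurable M S" and [measurable]: "h \<in> borel_measurable S" "L \<in> sets S"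
  shows "W_integral (distr M S Z) h L u0 = W_integral M (\<lambda>\<omega>. h (Z \<omega>)) {\<omega> \<in> space M. Z \<omega> \<in> L} u0"
proof -
  have [measurable]: "rv_cdf M (\<lambda>\<omega>. h (Z \<omega>)) \<in> borel_measurable borel" "indicator L \<in> borel_measurable S"
    by (simp_all add: borel_measurable_indicator)
  have "W_integral (distr M S Z) h L u0 = (\<integral>\<omega>. PhiW u0 (rv_cdf M (\<lambda>\<omega>. h (Z \<omega>)) (h (Z \<omega>))) * indicator L (Z \<omega>) \<partial>M)"
    unfolding W_integral_def rv_cdf_distr[OF Z, of h, simplified] by (rule integral_distr) measurable
  also have "\<dots> = W_integral M (\<lambda>\<omega>. h (Z \<omega>)) {\<omega> \<in> space M. Z \<omega> \<in> L} u0"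
    unfolding W_integral_def by (intro Bochner_Integration.integral_cong) (auto simp: indicator_def)
  finally show ?thesis .
qed

lemma (in prob_space) measure_indep_copy:
  assumes indep: "indep_var S Z S Z'" and same_distr: "distr M S Z = distr M S Z'"
    and E: "E \<in> sets (S \<Otimes>\<^sub>M S)"
  shows "measure M {\<omega> \<in> space M. (Z \<omega>, Z' \<omega>) \<in> E} = measure (distr M S Z \<Otimes>\<^sub>M distr M S Z) E"
proof -
  have Z: "random_variable S Z" "random_variable S Z'"
    and pair: "distr M S Z \<Otimes>\<^sub>M distr M S Z' = distr M (S \<Otimes>\<^sub>M S) (\<lambda>\<omega>. (Z \<omega>, Z' \<omega>))"
    using indep unfolding indep_var_distribution_eq by auto
  have "distr M S Z \<Otimes>\<^sub>M distr M S Z = distr M (S \<Otimes>\<^sub>M S) (\<lambda>\<omega>. (Z \<omega>, Z' \<omega>))"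
    using pair unfolding same_distr[symmetric] .
  moreover have "{\<omega> \<in> space M. (Z \<omega>, Z' \<omega>) \<in> E} = (\<lambda>\<omega>. (Z \<omega>, Z' \<omega>)) -` E \<inter> space M" by auto
  ultimately show ?thesis using Z E by (simp add: measure_distr)
qed

lemma (in prob_space) measure_indep_copy_compl:
  assumes indep: "indep_var S Z S Z'" and same_distr: "distr M S Z = distr M S Z'"
    and L: "L \<in> sets S"
  shows "measure M {\<omega> \<in> space M. Z \<omega> \<in> L \<and> Z' \<omega> \<notin> L}
    = measure M {\<omega> \<in> space M. Z \<omega> \<in> L} * (1 - measure M {\<omega> \<in> space M. Z \<omega> \<in> L})"
proof -
  have Z[measurable]: "Z \<in> measurable M S" "Z' \<in> measurable M S"
    using indep by (auto dest: indep_var_rv1 indep_var_rv2)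
  define D where "D = distr M S Z"
  interpret D: prob_space D unfolding D_def by (rule prob_space_distr) simp
  interpret DD: pair_prob_space D D by unfold_locales
  have "{\<omega> \<in> space M. Z \<omega> \<in> L \<and> Z' \<omega> \<notin> L} = {\<omega> \<in> space M. (Z \<omega>, Z' \<omega>) \<in> L \<times> (space S - L)}"
    using measurable_space[OF Z(2)] by auto
  also have "measure M \<dots> = measure (D \<Otimes>\<^sub>M D) (L \<times> (space S - L))"
    unfolding D_def using L by (intro measure_indep_copy[OF indep same_distr]) auto
  also have "\<dots> = measure D L * measure D (space S - L)"
    using L by (intro DD.measure_pair_measure_Times) (auto simp: D_def)
  also have "measure D (space S - L) = 1 - measure D L"
    using D.prob_compl[of L] L by (simp add: D_def)
  also have "measure D L = measure M {\<omega> \<in> space M. Z \<omega> \<in> L}"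
    using L by (simp add: D_def measure_distr_eq_Collect)
  finally show ?thesis .
qed

lemma (in prob_space) W_integral_decomposition_indep:
  fixes h :: "'b \<Rightarrow> real"
  assumes indep: "indep_var S Z S Z'" and same_distr: "distr M S Z = distr M S Z'"
    and h[measurable]: "h \<in> borel_measurable S" and atomless: "atomless_rv M (\<lambda>\<omega>. h (Z \<omega>))"
    and L[measurable]: "L \<in> sets S" and u0: "0 < u0" "u0 < 1"
  defines "A \<equiv> {x \<in> L. rv_quantile M (\<lambda>\<omega>. h (Z \<omega>)) (1 - u0) \<le> h x}"
  shows "W_integral M (\<lambda>\<omega>. h (Z \<omega>)) {\<omega> \<in> space M. Z \<omega> \<in> L} u0
    = measure M {\<omega> \<in> space M. Z \<omega> \<in> A} * measure M {\<omega> \<in> space M. Z \<omega> \<in> L}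
      - (measure M {\<omega> \<in> space M. Z \<omega> \<in> A})\<^sup>2 / 2
      + measure M {\<omega> \<in> space M. Z \<omega> \<in> A \<and> Z' \<omega> \<notin> L \<and> h (Z' \<omega>) < h (Z \<omega>)}"
proof -
  have Z[measurable]: "Z \<in> measurable M S" "Z' \<in> measurable M S"
    using indep by (auto dest: indep_var_rv1 indep_var_rv2)
  define D where "D = distr M S Z"
  interpret D: prob_space D unfolding D_def by (rule prob_space_distr) simp
  have [measurable]: "h \<in> borel_measurable D" "L \<in> sets D" by (simp_all add: D_def)
  have A_D: "A = {x \<in> L. rv_quantile D h (1 - u0) \<le> h x}"
    by (simp add: A_def D_def rv_quantile_def rv_cdf_distr)
  have [measurable]: "A \<in> sets S" unfolding A_def by measurable
  have "W_integral M (\<lambda>\<omega>. h (Z \<omega>)) {\<omega> \<in> space M. Z \<omega> \<in> L} u0 = W_integral D h L u0"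
    unfolding D_def by (rule W_integral_distr[symmetric]) measurable
  also have "\<dots> = measure D A * measure D L - (measure D A)\<^sup>2 / 2
      + measure (D \<Otimes>\<^sub>M D) {p \<in> space (D \<Otimes>\<^sub>M D). fst p \<in> A \<and> snd p \<notin> L \<and> h (snd p) < h (fst p)}"
    unfolding A_D
  proof (rule D.W_integral_decomposition)
    show "atomless_rv D h" using atomless by (simp add: D_def atomless_rv_distr)
  qed (use u0 in measurable)
  also have "measure (D \<Otimes>\<^sub>M D) {p \<in> space (D \<Otimes>\<^sub>M D). fst p \<in> A \<and> snd p \<notin> L \<and> h (snd p) < h (fst p)}
      = measure M {\<omega> \<in> space M. Z \<omega> \<in> A \<and> Z' \<omega> \<notin> L \<and> h (Z' \<omega>) < h (Z \<omega>)}"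
  proof -
    define E where "E = {p \<in> space (S \<Otimes>\<^sub>M S). fst p \<in> A \<and> snd p \<notin> L \<and> h (snd p) < h (fst p)}"
    have E: "E \<in> sets (S \<Otimes>\<^sub>M S)" unfolding E_def by measurable
    have "{p \<in> space (D \<Otimes>\<^sub>M D). fst p \<in> A \<and> snd p \<notin> L \<and> h (snd p) < h (fst p)} = E"
      by (simp add: D_def E_def space_pair_measure)
    moreover have "{\<omega> \<in> space M. (Z \<omega>, Z' \<omega>) \<in> E}
        = {\<omega> \<in> space M. Z \<omega> \<in> A \<and> Z' \<omega> \<notin> L \<and> h (Z' \<omega>) < h (Z \<omega>)}"
      using measurable_space[OF Z(1)] measurable_space[OF Z(2)] by (auto simp: E_def space_pair_measure)
    ultimately show ?thesis using measure_indep_copy[OF indep same_distr E] by (simp add: D_def)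
  qed
  finally show ?thesis by (simp add: D_def measure_distr_eq_Collect)
qed

lemma Wcrit_eq_W_integral:
  "Wcrit M X Y s u0
    = W_integral M (\<lambda>\<omega>. s (X \<omega>)) {\<omega> \<in> space M. Y \<omega> = 1} u0 / measure M {\<omega> \<in> space M. Y \<omega> = 1}"
  by (simp add: Wcrit_def W_integral_def cdfS_def rv_cdf_def)

lemma Wcrit_le_Wcrit_Sstar:
  fixes X :: "'w \<Rightarrow> 'a" and Y :: "'w \<Rightarrow> real"
  assumes "prob_space M" and X[measurable]: "X \<in> measurable M N" and [measurable]: "Y \<in> borel_measurable M"
    and eta[measurable]: "eta \<in> borel_measurable N" and eta_bounds: "\<forall>x. 0 \<le> eta x \<and> eta x \<le> 1"
    and regression: "\<forall>B \<in> sets N. measure M {\<omega> \<in> space M. X \<omega> \<in> B \<and> Y \<omega> = 1}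
            = (\<integral>\<omega>. eta (X \<omega>) * indicator {\<omega> \<in> space M. X \<omega> \<in> B} \<omega> \<partial>M)"
    and atomless_eta: "atomless_rv M (\<lambda>\<omega>. eta (X \<omega>))" and u0: "0 < u0" "u0 < 1"
    and s[measurable]: "s \<in> borel_measurable N" and atomless_s: "atomless_rv M (\<lambda>\<omega>. s (X \<omega>))"
    and s'[measurable]: "s' \<in> borel_measurable N" and Sstar: "in_Sstar M X N eta u0 s'"
  shows "Wcrit M X Y s u0 \<le> Wcrit M X Y s' u0"
proof -
  interpret prob_space M by fact
  define F where "F = vimage_algebra (space M) X N"
  define L where "L = {\<omega> \<in> space M. Y \<omega> = 1}"
  have "X \<in> space M \<rightarrow> space N" using measurable_space[OF X] by auto
  then have X_F: "X \<in> measurable F N" and sets_F: "sets F = {X -` B \<inter> space M |B. B \<in> sets N}"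
    unfolding F_def by (simp_all add: measurable_vimage_algebra1 sets_vimage_algebra2)
  have F_sub: "subalgebra M F"
    unfolding subalgebra_def F_def by (simp add: sets_image_in_sets)
  have F_meas: "(\<lambda>\<omega>. h (X \<omega>)) \<in> borel_measurable F" if "h \<in> borel_measurable N" for h
    using measurable_compose[OF X_F that] .
  have F_regression: "measure M (B \<inter> L) = (\<integral>\<omega>. eta (X \<omega>) * indicator B \<omega> \<partial>M)" if "B \<in> sets F" for B
  proof -
    obtain C where C: "C \<in> sets N" "B = {\<omega> \<in> space M. X \<omega> \<in> C}"
      using \<open>B \<in> sets F\<close> unfolding sets_F by auto
    then have "B \<inter> L = {\<omega> \<in> space M. X \<omega> \<in> C \<and> Y \<omega> = 1}" by (auto simp: L_def)
    then show ?thesis using regression C by simp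
  qed
  have "L \<in> sets M" unfolding L_def by measurable
  with eta_bounds have "W_integral M (\<lambda>\<omega>. s (X \<omega>)) L u0 \<le> W_integral M (\<lambda>\<omega>. eta (X \<omega>)) L u0"
    by (intro W_integral_le_regression[OF F_sub F_meas[OF s] atomless_s F_meas[OF eta] atomless_eta
          _ _ F_regression u0]) auto
  also have "\<dots> = W_integral M (\<lambda>\<omega>. s' (X \<omega>)) L u0"
    unfolding W_integral_def
  proof (intro Bochner_Integration.integral_cong refl)
    fix \<omega> assume "\<omega> \<in> space M"
    then show "PhiW u0 (rv_cdf M (\<lambda>\<omega>. eta (X \<omega>)) (eta (X \<omega>))) * indicator L \<omega>
        = PhiW u0 (rv_cdf M (\<lambda>\<omega>. s' (X \<omega>)) (s' (X \<omega>))) * indicator L \<omega>"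
      using PhiW_cdfS_Sstar_eq[OF \<open>prob_space M\<close> X eta s' atomless_eta u0 Sstar, of "X \<omega>"]
        measurable_space[OF X] by (simp add: cdfS_def rv_cdf_def)
  qed
  finally show ?thesis
    unfolding Wcrit_eq_W_integral L_def[symmetric] by (simp add: divide_right_mono)
qed

lemma W_integral_labelled_decomposition:
  fixes X X' :: "'w \<Rightarrow> 'a" and Y Y' :: "'w \<Rightarrow> real"
  assumes "prob_space M" and X[measurable]: "X \<in> measurable M N" and X'[measurable]: "X' \<in> measurable M N"
    and [measurable]: "Y \<in> borel_measurable M" "Y' \<in> borel_measurable M"
    and Y'_values: "\<forall>\<omega> \<in> space M. Y' \<omega> \<in> {-1, 1}"
    and indep: "prob_space.indep_var M (N \<Otimes>\<^sub>M borel) (\<lambda>\<omega>. (X \<omega>, Y \<omega>)) (N \<Otimes>\<^sub>M borel) (\<lambda>\<omega>. (X' \<omega>, Y' \<omega>))"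
    and same_distr: "distr M (N \<Otimes>\<^sub>M borel) (\<lambda>\<omega>. (X \<omega>, Y \<omega>)) = distr M (N \<Otimes>\<^sub>M borel) (\<lambda>\<omega>. (X' \<omega>, Y' \<omega>))"
    and u0: "0 < u0" "u0 < 1"
    and s[measurable]: "s \<in> borel_measurable N" and atomless: "atomless_rv M (\<lambda>\<omega>. s (X \<omega>))"
  defines "Q \<equiv> Qf M X s (1 - u0)"
  shows "W_integral M (\<lambda>\<omega>. s (X \<omega>)) {\<omega> \<in> space M. Y \<omega> = 1} u0
    = measure M {\<omega> \<in> space M. Q \<le> s (X \<omega>) \<and> Y \<omega> = 1} * measure M {\<omega> \<in> space M. Y \<omega> = 1}
      - (measure M {\<omega> \<in> space M. Q \<le> s (X \<omega>) \<and> Y \<omega> = 1})\<^sup>2 / 2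
      + measure M {\<omega> \<in> space M. s (X' \<omega>) < s (X \<omega>) \<and> Q \<le> s (X \<omega>) \<and> Y \<omega> = 1 \<and> Y' \<omega> = -1}"
proof -
  interpret prob_space M by fact
  define L where "L = {z \<in> space (N \<Otimes>\<^sub>M borel). snd z = (1::real)}"
  define A where "A = {z \<in> L. Q \<le> s (fst z)}"
  have L[measurable]: "L \<in> sets (N \<Otimes>\<^sub>M borel)" unfolding L_def by measurable
  have L_iff: "(X \<omega>, Y \<omega>) \<in> L \<longleftrightarrow> Y \<omega> = 1" "(X' \<omega>, Y' \<omega>) \<in> L \<longleftrightarrow> Y' \<omega> \<noteq> -1"
    if "\<omega> \<in> space M" for \<omega>
    using that measurable_space[OF X] measurable_space[OF X'] Y'_values
    by (auto simp: L_def space_pair_measure)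
  have A_iff: "(X \<omega>, Y \<omega>) \<in> A \<longleftrightarrow> Q \<le> s (X \<omega>) \<and> Y \<omega> = 1" if "\<omega> \<in> space M" for \<omega>
    using L_iff[OF that] by (auto simp: A_def L_def)
  have sets_eq:
    "{\<omega> \<in> space M. (X \<omega>, Y \<omega>) \<in> L} = {\<omega> \<in> space M. Y \<omega> = 1}"
    "{\<omega> \<in> space M. (X \<omega>, Y \<omega>) \<in> A} = {\<omega> \<in> space M. Q \<le> s (X \<omega>) \<and> Y \<omega> = 1}"
    "{\<omega> \<in> space M. (X \<omega>, Y \<omega>) \<in> A \<and> (X' \<omega>, Y' \<omega>) \<notin> L \<and> s (X' \<omega>) < s (X \<omega>)}
      = {\<omega> \<in> space M. s (X' \<omega>) < s (X \<omega>) \<and> Q \<le> s (X \<omega>) \<and> Y \<omega> = 1 \<and> Y' \<omega> = -1}"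
    using L_iff A_iff by blast+
  have [measurable]: "(\<lambda>z. s (fst z)) \<in> borel_measurable (N \<Otimes>\<^sub>M borel)" by measurable
  have "rv_quantile M (\<lambda>\<omega>. s (fst (X \<omega>, Y \<omega>))) (1 - u0) = Q"
    by (simp add: Q_def Qf_def rv_quantile_def cdfS_def rv_cdf_def)
  then have "W_integral M (\<lambda>\<omega>. s (X \<omega>)) {\<omega> \<in> space M. (X \<omega>, Y \<omega>) \<in> L} u0
      = measure M {\<omega> \<in> space M. (X \<omega>, Y \<omega>) \<in> A} * measure M {\<omega> \<in> space M. (X \<omega>, Y \<omega>) \<in> L}
        - (measure M {\<omega> \<in> space M. (X \<omega>, Y \<omega>) \<in> A})\<^sup>2 / 2
        + measure M {\<omega> \<in> space M. (X \<omega>, Y \<omega>) \<in> A \<and> (X' \<omega>, Y' \<omega>) \<notin> L \<and> s (X' \<omega>) < s (X \<omega>)}"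
    using W_integral_decomposition_indep[OF indep same_distr _ _ L u0, of "\<lambda>z. s (fst z)"] atomless
    by (simp add: A_def)
  then show ?thesis unfolding sets_eq .
qed

lemma Wcrit_decomposition:
  fixes X X' :: "'w \<Rightarrow> 'a" and Y Y' :: "'w \<Rightarrow> real"
  assumes "prob_space M" and X[measurable]: "X \<in> measurable M N" and X'[measurable]: "X' \<in> measurable M N"
    and [measurable]: "Y \<in> borel_measurable M" "Y' \<in> borel_measurable M"
    and Y'_values: "\<forall>\<omega> \<in> space M. Y' \<omega> \<in> {-1, 1}"
    and indep: "prob_space.indep_var M (N \<Otimes>\<^sub>M borel) (\<lambda>\<omega>. (X \<omega>, Y \<omega>)) (N \<Otimes>\<^sub>M borel) (\<lambda>\<omega>. (X' \<omega>, Y' \<omega>))"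
    and same_distr: "distr M (N \<Otimes>\<^sub>M borel) (\<lambda>\<omega>. (X \<omega>, Y \<omega>)) = distr M (N \<Otimes>\<^sub>M borel) (\<lambda>\<omega>. (X' \<omega>, Y' \<omega>))"
    and p: "0 < measure M {\<omega> \<in> space M. Y \<omega> = 1}" "measure M {\<omega> \<in> space M. Y \<omega> = 1} < 1"
    and u0: "0 < u0" "u0 < 1"
    and s[measurable]: "s \<in> borel_measurable N" and atomless: "atomless_rv M (\<lambda>\<omega>. s (X \<omega>))"
  shows "Wcrit M X Y s u0 =
    measure M {\<omega> \<in> space M. Y \<omega> = 1} / 2 * betaS M X Y s u0 * (2 - betaS M X Y s u0)
    + (1 - measure M {\<omega> \<in> space M. Y \<omega> = 1}) * LocAUC M X Y X' Y' s u0"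
proof -
  interpret prob_space M by fact
  define Q where "Q = Qf M X s (1 - u0)"
  define p where "p = measure M {\<omega> \<in> space M. Y \<omega> = 1}"
  define b where "b = measure M {\<omega> \<in> space M. Q \<le> s (X \<omega>) \<and> Y \<omega> = 1}"
  define loc where "loc = measure M {\<omega> \<in> space M. s (X' \<omega>) < s (X \<omega>) \<and> Q \<le> s (X \<omega>) \<and> Y \<omega> = 1 \<and> Y' \<omega> = -1}"
  have W: "W_integral M (\<lambda>\<omega>. s (X \<omega>)) {\<omega> \<in> space M. Y \<omega> = 1} u0 = b * p - b\<^sup>2 / 2 + loc"
    unfolding b_def p_def loc_def Q_def
    by (rule W_integral_labelled_decomposition[OF assms(1-8) u0 s atomless])
  have pairs: "measure M {\<omega> \<in> space M. Y \<omega> = 1 \<and> Y' \<omega> = -1} = p * (1 - p)"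
  proof -
    define L where "L = {z \<in> space (N \<Otimes>\<^sub>M borel). snd z = (1::real)}"
    have L: "L \<in> sets (N \<Otimes>\<^sub>M borel)" unfolding L_def by measurable
    have "{\<omega> \<in> space M. (X \<omega>, Y \<omega>) \<in> L} = {\<omega> \<in> space M. Y \<omega> = 1}"
      "{\<omega> \<in> space M. (X \<omega>, Y \<omega>) \<in> L \<and> (X' \<omega>, Y' \<omega>) \<notin> L} = {\<omega> \<in> space M. Y \<omega> = 1 \<and> Y' \<omega> = -1}"
      using measurable_space[OF X] measurable_space[OF X'] Y'_values
      by (auto simp: L_def space_pair_measure)
    then show ?thesis using measure_indep_copy_compl[OF indep same_distr L] by (simp add: p_def)
  qed
  have beta: "betaS M X Y s u0 = b / p"
  proof -
    have "{\<omega> \<in> space M. Q \<le> s (X \<omega>)} \<inter> {\<omega> \<in> space M. Y \<omega> = 1} = {\<omega> \<in> space M. Q \<le> s (X \<omega>) \<and> Y \<omega> = 1}"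
      by auto
    then show ?thesis by (simp add: betaS_def condP_def b_def p_def Q_def)
  qed
  have loc_AUC: "LocAUC M X Y X' Y' s u0 = loc / (p * (1 - p))"
    unfolding pairs[symmetric]
    by (simp add: LocAUC_def condP_def loc_def Q_def Int_def conj_commute conj_left_commute)
  show ?thesis
    using p unfolding Wcrit_eq_W_integral W beta loc_AUC p_def[symmetric]
    by (simp add: field_simps power2_eq_square)
qed

theorem theorem4:
  fixes M :: "'w measure" and N :: "'a measure"
    and X X' :: "'w \<Rightarrow> 'a" and Y Y' :: "'w \<Rightarrow> real"
    and eta :: "'a \<Rightarrow> real" and u0 :: real
  assumes "prob_space M"
    and "X \<in> measurable M N" and "X' \<in> measurable M N"
    and "Y \<in> borel_measurable M" and "Y' \<in> borel_measurable M"
    and "\<forall>\<omega> \<in> space M. Y \<omega> \<in> {-1, 1}" and "\<forall>\<omega> \<in> space M. Y' \<omega> \<in> {-1, 1}"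
    and "prob_space.indep_var M (N \<Otimes>\<^sub>M borel) (\<lambda>\<omega>. (X \<omega>, Y \<omega>))
                                (N \<Otimes>\<^sub>M borel) (\<lambda>\<omega>. (X' \<omega>, Y' \<omega>))"
    and "distr M (N \<Otimes>\<^sub>M borel) (\<lambda>\<omega>. (X \<omega>, Y \<omega>)) = distr M (N \<Otimes>\<^sub>M borel) (\<lambda>\<omega>. (X' \<omega>, Y' \<omega>))"
    and "0 < measure M {\<omega> \<in> space M. Y \<omega> = 1}" and "measure M {\<omega> \<in> space M. Y \<omega> = 1} < 1"
    \<comment> \<open>eta is a version of P(Y = 1 | X = x)\<close>
    and "eta \<in> borel_measurable N" and "\<forall>x. 0 \<le> eta x \<and> eta x \<le> 1"
    and "\<forall>B \<in> sets N. measure M {\<omega> \<in> space M. X \<omega> \<in> B \<and> Y \<omega> = 1}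
            = (\<integral>\<omega>. eta (X \<omega>) * indicator {\<omega> \<in> space M. X \<omega> \<in> B} \<omega> \<partial>M)"
    and "atomless_rv M (\<lambda>\<omega>. eta (X \<omega>))"
    and "0 < u0" and "u0 < 1"
  shows "(\<forall>s s'. s \<in> borel_measurable N \<and> atomless_rv M (\<lambda>\<omega>. s (X \<omega>)) \<and>
              s' \<in> borel_measurable N \<and> atomless_rv M (\<lambda>\<omega>. s' (X \<omega>)) \<and>
              in_Sstar M X N eta u0 s'
            \<longrightarrow> Wcrit M X Y s u0 \<le> Wcrit M X Y s' u0)
       \<and> (\<forall>s. s \<in> borel_measurable N \<and> atomless_rv M (\<lambda>\<omega>. s (X \<omega>)) \<longrightarrow>
            Wcrit M X Y s u0 =
              measure M {\<omega> \<in> space M. Y \<omega> = 1} / 2 * betaS M X Y s u0 * (2 - betaS M X Y s u0)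
              + (1 - measure M {\<omega> \<in> space M. Y \<omega> = 1}) * LocAUC M X Y X' Y' s u0)"
  using Wcrit_le_Wcrit_Sstar[OF assms(1,2,4,12,13,14,15,16,17)]
    Wcrit_decomposition[OF assms(1,2,3,4,5,7,8,9,10,11,16,17)]
  by blast

end
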